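(* The following four vertex-weighted multigraphs, all of which are simple graphs (at most one edge between any two vertices) with every vertex of weight $2$, are admissibly contractible: $K_1$, the complete graph on 5 vertices; $K_2$, the graph on vertices $v_1,\dots,v_6$ with edges $v_1v_2,v_1v_3,v_1v_5,v_1v_6,v_2v_3,v_2v_4,v_2v_6,v_3v_4,v_3v_5,v_4v_5,v_4v_6,v_5v_6$ (the complete tripartite graph $K_{2,2,2}$); $K_3$, the graph on vertices $v_1,\dots,v_7$ in which $v_1$ is adjacent to all other vertices and, among $v_2,\dots,v_7$, each of $v_2,v_4,v_6$ is adjacent to each of $v_3,v_5,v_7$ and there are no other edges; $K_4$, the complete bipartite graph $K_{4,4}$ with parts $\{v_1,v_3,v_5,v_7\}$ and $\{v_2,v_4,v_6,v_8\}$.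
   Context: A vertex-weighted multigraph is a quadruple $G=(V,E,r,\mathrm{wt})$ with $V$ a finite set of vertices, $E$ a finite set of edges, $r$ assigning to each edge an unordered pair $\{v,w\}$ of distinct vertices, and $\mathrm{wt}:V\to\mathbb{Z}$. $\deg(v)$ is the number of edges incident to $v$. For adjacent vertices $v,w$, the contraction with respect to $\{v,w\}$ identifies $v,w$ to one vertex of weight $\mathrm{wt}(v)+\mathrm{wt}(w)$, deletes all edges between $v$ and $w$, and keeps all other edges (endpoints replaced via the identification) and weights. Let $m$ be the number of edges between $v$ and $w$. The contraction is admissible if, for some labeling of the pair as $v,w$, there is an integer $0\leq l<m$ with: every vertex $x\notin\{v,w\}$ has $\deg(x)\geq 3$; $\mathrm{wt}(v)\geq l+1$, $\mathrm{wt}(w)\geq l+2$; $\deg(v)-m+l\geq 3$ and $\deg(w)-m+l\geq3$. A vertex-weighted multigraph is admissibly contractible if a finite sequence of admissible contractions transforms it into a single vertex. *)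

theory Defs
  imports Main
begin

text \<open>Vertex-weighted multigraphs G = (V, E, r, wt).  The map r assigns to each
edge the unordered pair of its endpoints, represented as a two-element set.\<close>

record ('a, 'e) vwgraph =
  verts  :: "'a set"
  edges  :: "'e set"
  ends   :: "'e \<Rightarrow> 'a set"
  weight :: "'a \<Rightarrow> int"

definition vwgraph_wf :: "('a, 'e) vwgraph \<Rightarrow> bool" where
  "vwgraph_wf G \<longleftrightarrow> finite (verts G) \<and> finite (edges G) \<and>
     (\<forall>e\<in>edges G. \<exists>a b. a \<in> verts G \<and> b \<in> verts G \<and> a \<noteq> b \<and> ends G e = {a, b})"

definition vdeg :: "('a, 'e) vwgraph \<Rightarrow> 'a \<Rightarrow> nat" where
  "vdeg G x = card {e \<in> edges G. x \<in> ends G e}"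

definition emult :: "('a, 'e) vwgraph \<Rightarrow> 'a \<Rightarrow> 'a \<Rightarrow> nat" where
  "emult G v w = card {e \<in> edges G. ends G e = {v, w}}"

definition contract :: "('a, 'e) vwgraph \<Rightarrow> 'a \<Rightarrow> 'a \<Rightarrow> ('a, 'e) vwgraph" where
  "contract G v w =
     \<lparr> verts = verts G - {w},
       edges = {e \<in> edges G. ends G e \<noteq> {v, w}},
       ends = (\<lambda>e. (\<lambda>x. if x = w then v else x) ` ends G e),
       weight = (\<lambda>x. if x = v then weight G v + weight G w else weight G x) \<rparr>"

definition admissible_labelled :: "('a, 'e) vwgraph \<Rightarrow> 'a \<Rightarrow> 'a \<Rightarrow> bool" where
  "admissible_labelled G v w \<longleftrightarrow>
     (\<exists>l::nat. l < emult G v w \<and>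
        (\<forall>x \<in> verts G - {v, w}. vdeg G x \<ge> 3) \<and>
        weight G v \<ge> int l + 1 \<and> weight G w \<ge> int l + 2 \<and>
        int (vdeg G v) - int (emult G v w) + int l \<ge> 3 \<and>
        int (vdeg G w) - int (emult G v w) + int l \<ge> 3)"

definition admissible_contraction :: "('a, 'e) vwgraph \<Rightarrow> 'a \<Rightarrow> 'a \<Rightarrow> bool" where
  "admissible_contraction G v w \<longleftrightarrow>
     v \<in> verts G \<and> w \<in> verts G \<and> v \<noteq> w \<and> emult G v w > 0 \<and>
     (admissible_labelled G v w \<or> admissible_labelled G w v)"

inductive admissibly_contractible :: "('a, 'e) vwgraph \<Rightarrow> bool" where
  single: "vwgraph_wf G \<Longrightarrow> card (verts G) = 1 \<Longrightarrow> admissibly_contractible G"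
| step: "vwgraph_wf G \<Longrightarrow> admissible_contraction G v w \<Longrightarrow>
         admissibly_contractible (contract G v w) \<Longrightarrow> admissibly_contractible G"

definition simple_w2 :: "nat set \<Rightarrow> nat set set \<Rightarrow> (nat, nat set) vwgraph" where
  "simple_w2 V E = \<lparr> verts = V, edges = E, ends = id, weight = (\<lambda>_. 2) \<rparr>"

definition graphK1 :: "(nat, nat set) vwgraph" where
  "graphK1 = simple_w2 {1..5} {{a, b} | a b. a \<in> {1..5} \<and> b \<in> {1..5} \<and> a \<noteq> b}"

definition graphK2 :: "(nat, nat set) vwgraph" where
  "graphK2 = simple_w2 {1..6}
     {{1,2},{1,3},{1,5},{1,6},{2,3},{2,4},{2,6},{3,4},{3,5},{4,5},{4,6},{5,6}}"

definition graphK3 :: "(nat, nat set) vwgraph" where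
  "graphK3 = simple_w2 {1..7}
     ({{1, k} | k. k \<in> {2..7}} \<union> {{a, b} | a b. a \<in> {2,4,6} \<and> b \<in> {3,5,7}})"

definition graphK4 :: "(nat, nat set) vwgraph" where
  "graphK4 = simple_w2 {1..8} {{a, b} | a b. a \<in> {1,3,5,7} \<and> b \<in> {2,4,6,8}}"

end

theory Submission imports Defs begin

text \<open>Each graph is contracted to a single vertex by an explicit sequence of admissible
contractions.  The first contractions are along single edges (l = 0); a merged vertex
accumulates weight and is joined by parallel edges to the common neighbours of the merged
pair, so it can go on absorbing neighbours with l = 1, and a final contraction along the
remaining bundle of parallel edges, with l = 3, leaves one vertex.\<close>

lemma contract_wf:
  assumes "vwgraph_wf G" "v \<in> verts G" "w \<in> verts G" "v \<noteq> w"
  shows "vwgraph_wf (contract G v w)"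
  unfolding vwgraph_wf_def
proof (intro conjI ballI)
  show "finite (verts (contract G v w))" "finite (edges (contract G v w))"
    using assms(1) by (auto simp: contract_def vwgraph_wf_def)
next
  fix e assume e: "e \<in> edges (contract G v w)"
  define f where "f = (\<lambda>x. if x = w then v else x)"
  from e have "e \<in> edges G" and not_vw: "ends G e \<noteq> {v, w}"
    by (auto simp: contract_def)
  then obtain a b where ab: "a \<in> verts G" "b \<in> verts G" "a \<noteq> b" "ends G e = {a, b}"
    using assms(1) unfolding vwgraph_wf_def by blast
  have "f a \<noteq> f b"
  proof
    assume "f a = f b"
    with ab(3) have "{a, b} = {v, w}"
      using assms(4) unfolding f_def by (auto split: if_splits)
    with not_vw ab(4) show False by simp
  qed
  moreover have "f a \<in> verts (contract G v w)" "f b \<in> verts (contract G v w)"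
    using ab assms unfolding f_def by (auto simp: contract_def)
  moreover have "ends (contract G v w) e = {f a, f b}"
    using ab unfolding f_def by (simp add: contract_def)
  ultimately show "\<exists>a b. a \<in> verts (contract G v w) \<and> b \<in> verts (contract G v w) \<and>
      a \<noteq> b \<and> ends (contract G v w) e = {a, b}"
    by blast
qed

definition admissible_labelled_with :: "('a, 'e) vwgraph \<Rightarrow> 'a \<Rightarrow> 'a \<Rightarrow> nat \<Rightarrow> bool" where
  "admissible_labelled_with G v w l \<longleftrightarrow>
     v \<in> verts G \<and> w \<in> verts G \<and> v \<noteq> w \<and> l < emult G v w \<and>
     (\<forall>x \<in> verts G - {v, w}. vdeg G x \<ge> 3) \<and>
     weight G v \<ge> int l + 1 \<and> weight G w \<ge> int l + 2 \<and>
     int (vdeg G v) - int (emult G v w) + int l \<ge> 3 \<and>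
     int (vdeg G w) - int (emult G v w) + int l \<ge> 3"

lemma admissible_contraction_if_labelled_with:
  "admissible_labelled_with G v w l \<Longrightarrow> admissible_contraction G v w"
  unfolding admissible_labelled_with_def admissible_contraction_def admissible_labelled_def
  by auto

fun contraction_certificate :: "('a, 'e) vwgraph \<Rightarrow> ('a \<times> 'a \<times> nat) list \<Rightarrow> bool" where
  "contraction_certificate G [] \<longleftrightarrow> card (verts G) = 1"
| "contraction_certificate G ((v, w, l) # cs) \<longleftrightarrow>
     admissible_labelled_with G v w l \<and> contraction_certificate (contract G v w) cs"

lemma admissibly_contractible_if_certificate:
  "vwgraph_wf G \<Longrightarrow> contraction_certificate G cs \<Longrightarrow> admissibly_contractible G"
proof (induction cs arbitrary: G)
  case Nil
  then show ?case by (simp add: admissibly_contractible.single)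
next
  case (Cons c cs)
  obtain v w l where c: "c = (v, w, l)" by (cases c)
  with Cons.prems have adm: "admissible_labelled_with G v w l"
    and rest: "contraction_certificate (contract G v w) cs"
    by simp_all
  from adm have "vwgraph_wf (contract G v w)"
    using contract_wf[OF Cons.prems(1)] by (simp add: admissible_labelled_with_def)
  then have "admissibly_contractible (contract G v w)" using rest by (rule Cons.IH)
  with Cons.prems(1) adm show ?case
    by (blast intro: admissibly_contractible.step admissible_contraction_if_labelled_with)
qed

lemma simple_w2_wf:
  assumes "finite V" "\<forall>e\<in>E. e \<subseteq> V \<and> card e = 2"
  shows "vwgraph_wf (simple_w2 V E)"
proof -
  have "E \<subseteq> Pow V" using assms(2) by blast
  then have "finite E" using assms(1) by (rule finite_subset[OF _ finite_Pow_iff[THEN iffD2]])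
  with assms show ?thesis
    unfolding vwgraph_wf_def simple_w2_def by (fastforce simp: card_2_iff)
qed

text \<open>Every graph obtained from simple_w2 V E by contractions has this form, with h
sending each original vertex to the vertex it has been merged into.\<close>

definition quotient_graph ::
  "'a set \<Rightarrow> 'a set set \<Rightarrow> ('a \<Rightarrow> 'a) \<Rightarrow> ('a \<Rightarrow> int) \<Rightarrow> ('a, 'a set) vwgraph" where
  "quotient_graph V E h W = \<lparr> verts = V, edges = E, ends = (\<lambda>e. h ` e), weight = W \<rparr>"

lemma quotient_graph_simps [simp]:
  "verts (quotient_graph V E h W) = V" "edges (quotient_graph V E h W) = E"
  "ends (quotient_graph V E h W) e = h ` e" "weight (quotient_graph V E h W) = W"
  by (simp_all add: quotient_graph_def)

lemma simple_w2_eq_quotient_graph: "simple_w2 V E = quotient_graph V E id (\<lambda>_. 2)"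
  by (simp add: simple_w2_def quotient_graph_def id_def)

lemma contract_quotient_graph:
  "contract (quotient_graph V E h W) v w =
     quotient_graph (V - {w}) (Set.filter (\<lambda>e. h ` e \<noteq> {v, w}) E) (id(w := v) \<circ> h)
       (W(v := W v + W w))"
  by (auto simp: contract_def quotient_graph_def image_image fun_eq_iff)

lemma vdeg_eq_card_filter: "vdeg G x = card (Set.filter (\<lambda>e. x \<in> ends G e) (edges G))"
  by (simp add: vdeg_def)

lemma emult_eq_card_filter: "emult G v w = card (Set.filter (\<lambda>e. ends G e = {v, w}) (edges G))"
  by (simp add: emult_def)

lemma Set_filter_insert:
  "Set.filter P (insert a A) = (if P a then insert a (Set.filter P A) else Set.filter P A)"
  by auto

lemma Set_filter_empty: "Set.filter P {} = {}"
  by auto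

text \<open>It must be used with
Set.filter_eq and if_image_distrib removed from the simpset: the former unfolds to a set
comprehension that the simplifier does not evaluate, the latter splits the images under
the renamings id(w := v) and makes evaluation very slow.\<close>

lemmas certificate_eval = admissible_labelled_with_def vdeg_eq_card_filter emult_eq_card_filter
  Set_filter_insert Set_filter_empty contract_quotient_graph doubleton_eq_iff insert_Diff_if

lemma admissibly_contractible_simple_w2:
  assumes "finite V" "\<forall>e\<in>E. e \<subseteq> V \<and> card e = 2"
    and "contraction_certificate (quotient_graph V E id (\<lambda>_. 2)) cs"
  shows "admissibly_contractible (simple_w2 V E)"
  using admissibly_contractible_if_certificate[OF simple_w2_wf[OF assms(1,2)]] assms(3)
  by (simp add: simple_w2_eq_quotient_graph)

lemma doubletons_Collect_eq_UN:
  "{{a, b} | a b. a \<in> A \<and> b \<in> B \<and> P a b} = (\<Union>a\<in>A. \<Union>b\<in>B. if P a b then {{a, b}} else {})"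
  by (auto split: if_splits)

lemma bipartite_doubletons_eq_UN: "{{a, b} | a b. a \<in> A \<and> b \<in> B} = (\<Union>a\<in>A. \<Union>b\<in>B. {{a, b}})"
  by auto

lemma graphK1_eq:
  "graphK1 = simple_w2 {1,2,3,4,5}
     {{1,2},{1,3},{1,4},{1,5},{2,3},{2,4},{2,5},{3,4},{3,5},{4,5}}"
proof -
  have intervals: "{1..5::nat} = {1,2,3,4,5}" by auto
  show ?thesis
    unfolding graphK1_def intervals doubletons_Collect_eq_UN by (simp add: insert_commute)
qed

lemma graphK2_eq:
  "graphK2 = simple_w2 {1,2,3,4,5,6}
     {{1,2},{1,3},{1,5},{1,6},{2,3},{2,4},{2,6},{3,4},{3,5},{4,5},{4,6},{5,6}}"
proof -
  have "{1..6::nat} = {1,2,3,4,5,6}" by auto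
  then show ?thesis unfolding graphK2_def by (rule arg_cong)
qed

lemma graphK3_eq:
  "graphK3 = simple_w2 {1,2,3,4,5,6,7}
     {{1,2},{1,3},{1,4},{1,5},{1,6},{1,7},{2,3},{2,5},{2,7},{3,4},{3,6},{4,5},{4,7},{5,6},{6,7}}"
proof -
  have intervals: "{1..7::nat} = {1,2,3,4,5,6,7}" "{2..7::nat} = {2,3,4,5,6,7}" by auto
  show ?thesis
    unfolding graphK3_def intervals bipartite_doubletons_eq_UN Setcompr_eq_image
    by (simp add: insert_commute)
qed

lemma graphK4_eq:
  "graphK4 = simple_w2 {1,2,3,4,5,6,7,8}
     {{1,2},{1,4},{1,6},{1,8},{2,3},{2,5},{2,7},{3,4},{3,6},{3,8},{4,5},{4,7},{5,6},{5,8},{6,7},{7,8}}"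
proof -
  have intervals: "{1..8::nat} = {1,2,3,4,5,6,7,8}" by auto
  show ?thesis
    unfolding graphK4_def intervals bipartite_doubletons_eq_UN by (simp add: insert_commute)
qed

lemma graphK1_admissibly_contractible: "admissibly_contractible graphK1"
  unfolding graphK1_eq
  by (rule admissibly_contractible_simple_w2[where cs = "[(1,2,0), (3,1,1), (4,5,0), (4,3,3)]"])
    (simp_all add: certificate_eval del: Set.filter_eq if_image_distrib)

lemma graphK2_admissibly_contractible: "admissibly_contractible graphK2"
  unfolding graphK2_eq
  by (rule admissibly_contractible_simple_w2
        [where cs = "[(1,2,0), (3,1,1), (4,3,1), (5,6,0), (5,4,3)]"])
    (simp_all add: certificate_eval del: Set.filter_eq if_image_distrib)

lemma graphK3_admissibly_contractible: "admissibly_contractible graphK3"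
  unfolding graphK3_eq
  by (rule admissibly_contractible_simple_w2
        [where cs = "[(1,2,0), (3,1,1), (4,3,1), (5,6,0), (5,7,0), (4,5,3)]"])
    (simp_all add: certificate_eval del: Set.filter_eq if_image_distrib)

lemma graphK4_admissibly_contractible: "admissibly_contractible graphK4"
  unfolding graphK4_eq
  by (rule admissibly_contractible_simple_w2
        [where cs = "[(1,2,0), (1,3,0), (4,1,1), (5,4,1), (6,7,0), (6,8,0), (5,6,3)]"])
    (simp_all add: certificate_eval del: Set.filter_eq if_image_distrib)

theorem proposition3p5:
  shows "admissibly_contractible graphK1 \<and> admissibly_contractible graphK2 \<and>
         admissibly_contractible graphK3 \<and> admissibly_contractible graphK4"
  using graphK1_admissibly_contractible graphK2_admissibly_contractible
    graphK3_admissibly_contractible graphK4_admissibly_contractible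
  by blast

end
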